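(* Let $A$ be an $F_n$-good $n\times n$ matrix. Then: (1) Any entry $1$ in column $1$ of $A$ lies in row $1$ or row $n$; similarly any entry $1$ in column $n$ lies in row $1$ or row $n$. (2) Each of the rows $A_2,A_3,\ldots,A_{n-1}$ is a standard basis vector $\vec{e}_j$ (a row of the identity matrix $I_n$), and these $n-2$ rows are pairwise distinct. (3) Each of the rows $A_1$ and $A_n$ contains either one or two entries equal to $1$. (4) Row $A_1$ has an entry $1$ in column $1$ or in column $n$, and the same holds for row $A_n$. If $A_1$ (resp. $A_n$) has a second entry equal to $1$, it lies in column $3$ or column $n-2$.
   Context: $F_n$ is the set of vectors $\vec{x}=(x_1,\ldots,x_n)\in\mathbb{Z}_2^n$ with no $i$ such that $x_i=x_{i+1}=1$. An $n\times n$ matrix $A$ over $\mathbb{Z}_2$ is $F_n$-good if it is invertible and $A\vec{x}\in F_n$ for all $\vec{x}\in F_n$. $A_i$ denotes the $i$-th row of $A$, $A_{i,j}$ its $(i,j)$ entry, and $\vec{e}_j$ the $j$-th standard basis vector of $\mathbb{Z}_2^n$. *)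

theory Defs
  imports Main "HOL-Library.Z2"
begin

text \<open>Vectors in Z_2^n are functions nat => bit, indices 1..n, zero outside.
  n x n matrices over Z_2 are functions nat => nat => bit; only entries with
  indices in 1..n are meaningful.\<close>

definition Fn :: "nat \<Rightarrow> (nat \<Rightarrow> bit) set" where
  "Fn n = {x. (\<forall>i. i \<notin> {1..n} \<longrightarrow> x i = 0) \<and>
              (\<forall>i\<in>{1..<n}. \<not> (x i = 1 \<and> x (Suc i) = 1))}"

definition mat_vec :: "nat \<Rightarrow> (nat \<Rightarrow> nat \<Rightarrow> bit) \<Rightarrow> (nat \<Rightarrow> bit) \<Rightarrow> (nat \<Rightarrow> bit)" where
  "mat_vec n A x = (\<lambda>i. if i \<in> {1..n} then (\<Sum>j=1..n. A i j * x j) else 0)"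

definition mat_invertible :: "nat \<Rightarrow> (nat \<Rightarrow> nat \<Rightarrow> bit) \<Rightarrow> bool" where
  "mat_invertible n A \<longleftrightarrow> (\<exists>B. \<forall>i\<in>{1..n}. \<forall>k\<in>{1..n}.
      (\<Sum>j=1..n. A i j * B j k) = (if i = k then 1 else 0) \<and>
      (\<Sum>j=1..n. B i j * A j k) = (if i = k then 1 else 0))"

definition Fn_good :: "nat \<Rightarrow> (nat \<Rightarrow> nat \<Rightarrow> bit) \<Rightarrow> bool" where
  "Fn_good n A \<longleftrightarrow> mat_invertible n A \<and> (\<forall>x\<in>Fn n. mat_vec n A x \<in> Fn n)"

definition mat_row :: "nat \<Rightarrow> (nat \<Rightarrow> nat \<Rightarrow> bit) \<Rightarrow> nat \<Rightarrow> (nat \<Rightarrow> bit)" where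
  "mat_row n A i = (\<lambda>k. if k \<in> {1..n} then A i k else 0)"

definition std_basis :: "nat \<Rightarrow> nat \<Rightarrow> (nat \<Rightarrow> bit)" where
  "std_basis n j = (\<lambda>k. if k \<in> {1..n} \<and> k = j then 1 else 0)"

end

theory Submission
  imports Defs "HOL-Library.Indicator_Function"
begin

text \<open>Applying A to the indicator vectors of a single column a, or of two non-adjacent
  columns a, b, shows that two consecutive rows of an F_n-good matrix never share a column
  and that a 1 at (i, a) and a 1 at (i+1, b) force |a - b| = 1. In a middle row i every 1
  thus lies next to every 1 of rows i-1 and i+1. Two distinct 1s in row i, or a 1 in
  column 1 or n, would confine the supports of rows i-1 and i+1 to one common column,
  making these rows equal and contradicting invertibility. Likewise all 1s of a border
  row lie next to one 1 of its neighbouring row, so there are at most two of them, two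
  columns apart. Finally, the 1s of the columns 1 and n lie in border rows; if both lay
  in the same border row, they would be two columns apart, so n = 3, and the other border
  row would have no 1 left outside the columns 1 and 3.\<close>

definition row_support :: "nat \<Rightarrow> (nat \<Rightarrow> nat \<Rightarrow> bit) \<Rightarrow> nat \<Rightarrow> nat set" where
  "row_support n A i = {j\<in>{1..n}. A i j = 1}"

lemma finite_row_support [simp]: "finite (row_support n A i)"
  by (simp add: row_support_def)

lemma mat_row_eq_iff_row_support_eq:
  "mat_row n A i = mat_row n A k \<longleftrightarrow> row_support n A i = row_support n A k"
proof
  assume "row_support n A i = row_support n A k"
  then have "A i j = A k j" if "j \<in> {1..n}" for j
    using that by (auto simp: row_support_def set_eq_iff) (metis bit_not_one_iff)
  then show "mat_row n A i = mat_row n A k"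
    by (auto simp: mat_row_def)
next
  assume rows: "mat_row n A i = mat_row n A k"
  have "A i j = A k j" if "j \<in> {1..n}" for j
    using that fun_cong[OF rows, of j] by (auto simp: mat_row_def)
  then show "row_support n A i = row_support n A k"
    by (auto simp: row_support_def)
qed

lemma invertible_row_support_nonempty:
  assumes "mat_invertible n A" "i \<in> {1..n}"
  shows "row_support n A i \<noteq> {}"
proof
  assume empty: "row_support n A i = {}"
  obtain B where "(\<Sum>j=1..n. A i j * B j i) = 1"
    using assms unfolding mat_invertible_def by (metis (full_types))
  moreover have "A i j = 0" if "j \<in> {1..n}" for j
    using empty that by (auto simp: row_support_def)
  ultimately show False by simp
qed

lemma invertible_column_nonzero:
  assumes "mat_invertible n A" "j \<in> {1..n}"
  shows "\<exists>i\<in>{1..n}. A i j = 1"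
proof (rule ccontr)
  assume "\<not> ?thesis"
  then have zero: "A i j = 0" if "i \<in> {1..n}" for i
    using that by auto
  obtain B where "(\<Sum>i=1..n. B j i * A i j) = 1"
    using assms unfolding mat_invertible_def by (metis (full_types))
  with zero show False by simp
qed

lemma invertible_inj_on_mat_row:
  assumes "mat_invertible n A"
  shows "inj_on (mat_row n A) {1..n}"
proof (rule inj_onI)
  fix i k assume ik: "i \<in> {1..n}" "k \<in> {1..n}" and eq: "mat_row n A i = mat_row n A k"
  have rows: "A i j = A k j" if "j \<in> {1..n}" for j
    using that fun_cong[OF eq, of j] by (simp add: mat_row_def)
  obtain B where B: "\<forall>i\<in>{1..n}. \<forall>k\<in>{1..n}. (\<Sum>j=1..n. A i j * B j k) = (if i = k then 1 else 0)"
    using assms by (auto simp: mat_invertible_def)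
  have "(\<Sum>j=1..n. A i j * B j i) = (\<Sum>j=1..n. A k j * B j i)"
    using rows by (intro sum.cong) auto
  with B ik have "(1::bit) = (if k = i then 1 else 0)" by simp
  then show "i = k" by (cases "k = i") auto
qed

lemma invertible_neighbours_of_row_not_confined:
  assumes "mat_invertible n A" "i \<in> {2..n-1}"
    and "row_support n A (i - 1) \<union> row_support n A (Suc i) \<subseteq> {d}"
  shows False
proof -
  have rows: "i - 1 \<in> {1..n}" "Suc i \<in> {1..n}" using assms(2) by auto
  have "row_support n A (i - 1) = {d}" "row_support n A (Suc i) = {d}"
    using assms(3) invertible_row_support_nonempty[OF assms(1) rows(1)]
      invertible_row_support_nonempty[OF assms(1) rows(2)] by blast+
  then have "mat_row n A (i - 1) = mat_row n A (Suc i)"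
    by (simp add: mat_row_eq_iff_row_support_eq)
  then have "i - 1 = Suc i"
    using invertible_inj_on_mat_row[OF assms(1)] rows by (auto dest: inj_onD)
  then show False by simp
qed

lemma mat_vec_indicator:
  assumes "S \<subseteq> {1..n}" "i \<in> {1..n}"
  shows "mat_vec n A (indicator S) i = sum (A i) S"
proof -
  have "(\<Sum>j=1..n. A i j * indicator S j) = sum (A i) ({1..n} \<inter> S)"
    by (rule sum_mult_indicator) simp
  also have "{1..n} \<inter> S = S" using assms(1) by blast
  finally show ?thesis using assms(2) by (simp add: mat_vec_def)
qed

lemma indicator_in_Fn:
  assumes "S \<subseteq> {1..n}" "\<And>j. j \<in> S \<Longrightarrow> Suc j \<notin> S"
  shows "indicator S \<in> Fn n"
  using assms by (auto simp: Fn_def indicator_def)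

lemma Fn_good_consecutive_rows_disjoint:
  assumes "Fn_good n A" "i \<in> {1..<n}" "a \<in> {1..n}"
  shows "\<not> (A i a = 1 \<and> A (Suc i) a = 1)"
proof -
  have "mat_vec n A (indicator {a}) \<in> Fn n"
    using assms indicator_in_Fn[of "{a}" n] by (auto simp: Fn_good_def)
  with assms(2) mat_vec_indicator[of "{a}" n _ A] assms(3) show ?thesis
    by (auto simp: Fn_def)
qed

lemma Fn_good_consecutive_rows_adjacent_columns:
  assumes good: "Fn_good n A" and i: "i \<in> {1..<n}" and ab: "a \<in> {1..n}" "b \<in> {1..n}"
    and ones: "A i a = 1" "A (Suc i) b = 1"
  shows "b = Suc a \<or> a = Suc b"
proof (rule ccontr)
  assume far: "\<not> ?thesis"
  have rows: "i \<in> {1..n}" "Suc i \<in> {1..n}" using i by auto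
  have zeros: "A (Suc i) a = 0" "A i b = 0"
    using Fn_good_consecutive_rows_disjoint[OF good i ab(1)]
      Fn_good_consecutive_rows_disjoint[OF good i ab(2)] ones by auto
  then have "a \<noteq> b" using ones by auto
  have "indicator {a, b} \<in> Fn n"
    using far ab by (intro indicator_in_Fn) auto
  then have "mat_vec n A (indicator {a, b}) \<in> Fn n"
    using good by (simp add: Fn_good_def)
  then have "\<not> (sum (A i) {a, b} = 1 \<and> sum (A (Suc i)) {a, b} = 1)"
    using i ab rows mat_vec_indicator[of "{a, b}" n _ A] by (auto simp: Fn_def)
  with \<open>a \<noteq> b\<close> ones zeros show False by simp
qed

lemma Fn_good_row_support_of_adjacent_row:
  assumes good: "Fn_good n A" and ik: "i \<in> {1..n}" "k \<in> {1..n}" "k = Suc i \<or> i = Suc k"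
    and a: "a \<in> {1..n}" "A i a = 1"
  shows "row_support n A k \<subseteq> {a - 1, Suc a}"
proof
  fix b assume "b \<in> row_support n A k"
  then have b: "b \<in> {1..n}" "A k b = 1" by (auto simp: row_support_def)
  from ik(3) have "b = Suc a \<or> a = Suc b"
  proof
    assume "k = Suc i"
    then show ?thesis
      using Fn_good_consecutive_rows_adjacent_columns[OF good _ a(1) b(1) a(2)] b(2) ik by auto
  next
    assume "i = Suc k"
    then show ?thesis
      using Fn_good_consecutive_rows_adjacent_columns[OF good _ b(1) a(1) b(2)] a(2) ik by auto
  qed
  then show "b \<in> {a - 1, Suc a}" by auto
qed

lemma exists_adjacent_row:
  assumes "n \<ge> 2" "r \<in> {1..n}"
  obtains s where "s \<in> {1..n}" "s = Suc r \<or> r = Suc s"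
proof (cases "r = 1")
  case True
  then show ?thesis using assms that[of 2] by auto
next
  case False
  then show ?thesis using assms by (intro that[of "r - 1"]) auto
qed

lemma Fn_good_row_support_confined:
  assumes good: "Fn_good n A" and "n \<ge> 2" "r \<in> {1..n}"
  obtains b where "row_support n A r \<subseteq> {b - 1, Suc b}"
proof -
  obtain s where s: "s \<in> {1..n}" "s = Suc r \<or> r = Suc s"
    using exists_adjacent_row assms(2,3) by blast
  have "row_support n A s \<noteq> {}"
    using invertible_row_support_nonempty good s(1) by (simp add: Fn_good_def)
  then obtain b where b: "b \<in> {1..n}" "A s b = 1" by (auto simp: row_support_def)
  have "row_support n A r \<subseteq> {b - 1, Suc b}"
    using s(2) by (intro Fn_good_row_support_of_adjacent_row[OF good s(1) assms(3) _ b]) auto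
  then show ?thesis by (rule that)
qed

lemma Fn_good_middle_row_neighbours:
  assumes good: "Fn_good n A" and i: "i \<in> {2..n-1}" and a: "a \<in> row_support n A i"
  shows "row_support n A (i - 1) \<union> row_support n A (Suc i) \<subseteq> {a - 1, Suc a}"
proof (rule Un_least)
  have a': "a \<in> {1..n}" "A i a = 1" using a by (auto simp: row_support_def)
  show "row_support n A (i - 1) \<subseteq> {a - 1, Suc a}"
    by (rule Fn_good_row_support_of_adjacent_row[OF good _ _ _ a']) (use i in auto)
  show "row_support n A (Suc i) \<subseteq> {a - 1, Suc a}"
    by (rule Fn_good_row_support_of_adjacent_row[OF good _ _ _ a']) (use i in auto)
qed

lemma Fn_good_middle_row_support_unique:
  assumes good: "Fn_good n A" and i: "i \<in> {2..n-1}"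
    and a: "a \<in> row_support n A i" "a' \<in> row_support n A i"
  shows "a = a'"
proof (rule ccontr)
  assume "a \<noteq> a'"
  moreover have "a \<ge> 1" "a' \<ge> 1" using a by (auto simp: row_support_def)
  ultimately have "{a - 1, Suc a} \<inter> {a' - 1, Suc a'} \<subseteq> {(a + a') div 2}" by auto
  with Fn_good_middle_row_neighbours[OF good i a(1)] Fn_good_middle_row_neighbours[OF good i a(2)]
  have "row_support n A (i - 1) \<union> row_support n A (Suc i) \<subseteq> {(a + a') div 2}" by blast
  moreover have "mat_invertible n A" using good by (simp add: Fn_good_def)
  ultimately show False using invertible_neighbours_of_row_not_confined[OF _ i] by blast
qed

lemma Fn_good_middle_row_support_interior:
  assumes good: "Fn_good n A" and i: "i \<in> {2..n-1}" and a: "a \<in> row_support n A i"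
  shows "a \<in> {2..n-1}"
proof (rule ccontr)
  assume "a \<notin> {2..n-1}"
  moreover have "a \<in> {1..n}" using a by (auto simp: row_support_def)
  ultimately have "{a - 1, Suc a} \<inter> {1..n} \<subseteq> {if a = 1 then 2 else n - 1}" by auto
  moreover have "row_support n A (i - 1) \<union> row_support n A (Suc i) \<subseteq> {1..n}"
    by (auto simp: row_support_def)
  ultimately have "row_support n A (i - 1) \<union> row_support n A (Suc i) \<subseteq> {if a = 1 then 2 else n - 1}"
    using Fn_good_middle_row_neighbours[OF good i a] by blast
  moreover have "mat_invertible n A" using good by (simp add: Fn_good_def)
  ultimately show False using invertible_neighbours_of_row_not_confined[OF _ i] by blast
qed

lemma Fn_good_middle_row_std_basis:
  assumes good: "Fn_good n A" and i: "i \<in> {2..n-1}"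
  obtains j where "j \<in> {2..n-1}" "mat_row n A i = std_basis n j"
proof -
  obtain j where j: "j \<in> row_support n A i"
    using invertible_row_support_nonempty good i by (fastforce simp: Fn_good_def)
  have "A i k = (if k = j then 1 else 0)" if k: "k \<in> {1..n}" for k
  proof (cases "k = j")
    case False
    then have "k \<notin> row_support n A i"
      using Fn_good_middle_row_support_unique[OF good i j] by blast
    with k False show ?thesis by (simp add: row_support_def bit_not_one_iff)
  qed (use j in \<open>simp add: row_support_def\<close>)
  then have "mat_row n A i = std_basis n j"
    using j by (auto simp: mat_row_def std_basis_def row_support_def)
  then show ?thesis
    using that Fn_good_middle_row_support_interior[OF good i j] by blast
qed

lemma Fn_good_border_column_in_border_row:
  assumes good: "Fn_good n A" and "i \<in> {1..n}" "c \<in> {1, n}" "A i c = 1"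
  shows "i = 1 \<or> i = n"
proof (rule ccontr)
  assume "\<not> ?thesis"
  then have i: "i \<in> {2..n-1}" using assms(2) by auto
  have "c \<in> row_support n A i" using assms(3,4) i by (auto simp: row_support_def)
  then have "c \<in> {2..n-1}" by (rule Fn_good_middle_row_support_interior[OF good i])
  with assms(3) show False by auto
qed

lemma Fn_good_row_support_card:
  assumes good: "Fn_good n A" and r: "r \<in> {1..n}"
  shows "card (row_support n A r) \<in> {1, 2}"
proof -
  have "row_support n A r \<noteq> {}"
    using invertible_row_support_nonempty good r by (auto simp: Fn_good_def)
  then have "card (row_support n A r) \<ge> 1"
    by (simp add: Suc_leI card_gt_0_iff)
  moreover have "card (row_support n A r) \<le> 2"
  proof (cases "n \<ge> 2")
    case True
    then obtain b where "row_support n A r \<subseteq> {b - 1, Suc b}"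
      using Fn_good_row_support_confined[OF good _ r] by blast
    then have "card (row_support n A r) \<le> card {b - 1, Suc b}" by (intro card_mono) auto
    also have "\<dots> \<le> 2" by (simp add: card_insert_le_m1)
    finally show ?thesis .
  next
    case False
    then have "row_support n A r \<subseteq> {1}" by (auto simp: row_support_def)
    then show ?thesis using subset_singletonD by fastforce
  qed
  ultimately show ?thesis by auto
qed

lemma Fn_good_row_entries_two_apart:
  assumes good: "Fn_good n A" and r: "r \<in> {1..n}"
    and a: "a \<in> row_support n A r" "a' \<in> row_support n A r" "a \<noteq> a'"
  shows "a' = a + 2 \<or> a = a' + 2"
proof -
  have "n \<ge> 2" using a by (auto simp: row_support_def)
  then obtain b where "row_support n A r \<subseteq> {b - 1, Suc b}"
    using Fn_good_row_support_confined[OF good _ r] by blast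
  then have "a \<in> {b - 1, Suc b}" "a' \<in> {b - 1, Suc b}" using a by blast+
  moreover have "a \<ge> 1" "a' \<ge> 1" using a by (auto simp: row_support_def)
  ultimately show ?thesis using \<open>a \<noteq> a'\<close> by auto
qed

lemma Fn_good_border_row_hits_border_column:
  assumes good: "Fn_good n A" and "n \<ge> 1" and r: "r \<in> {1, n}"
  shows "A r 1 = 1 \<or> A r n = 1"
proof (rule ccontr)
  assume miss: "\<not> ?thesis"
  have inv: "mat_invertible n A" using good by (simp add: Fn_good_def)
  define r' where "r' = (if r = 1 then n else 1)"
  have other_row: "A r' c = 1" if c: "c \<in> {1, n}" for c
  proof -
    have "c \<in> {1..n}" using c \<open>n \<ge> 1\<close> by auto
    then obtain i where i: "i \<in> {1..n}" "A i c = 1"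
      using invertible_column_nonzero[OF inv] by blast
    have "i = 1 \<or> i = n" using Fn_good_border_column_in_border_row[OF good i(1) c i(2)] .
    with i miss r c show ?thesis unfolding r'_def by auto
  qed
  have r': "r' \<in> {1..n}" "r' \<noteq> r" using miss other_row \<open>n \<ge> 1\<close> r'_def by auto
  have "1 \<in> row_support n A r'" "n \<in> row_support n A r'" "1 \<noteq> n"
    using other_row \<open>n \<ge> 1\<close> r r' by (auto simp: row_support_def r'_def)
  then have n3: "n = 3"
    using Fn_good_row_entries_two_apart[OF good r'(1)] by fastforce
  text \<open>The 1 of the middle row 2 sits in column 2, confining row r to the columns 1 and 3.\<close>
  have "row_support n A 2 \<noteq> {}"
    using invertible_row_support_nonempty[OF inv] n3 by simp
  then obtain b where b: "b \<in> row_support n A 2" by blast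
  then have "b = 2" using Fn_good_middle_row_support_interior[OF good _ b] n3 by simp
  with b have "A 2 2 = 1" by (simp add: row_support_def)
  then have "row_support n A r \<subseteq> {1, 3}"
    using Fn_good_row_support_of_adjacent_row[OF good, of 2 r 2] r n3 by auto
  moreover have "row_support n A r \<noteq> {}"
    using invertible_row_support_nonempty[OF inv] r \<open>n \<ge> 1\<close> by auto
  ultimately obtain e where "e \<in> {1, n}" "A r e = 1"
    using n3 by (auto simp: row_support_def)
  with miss show False by auto
qed

lemma Fn_good_border_row_entries:
  assumes good: "Fn_good n A" and "n \<ge> 1" and r: "r \<in> {1, n}"
  shows "\<exists>c\<in>{1, n}. A r c = 1 \<and> (\<forall>j\<in>{1..n}. j \<noteq> c \<and> A r j = 1 \<longrightarrow> j = 3 \<or> j = n - 2)"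
proof -
  obtain c where c: "c \<in> {1, n}" "A r c = 1"
    using Fn_good_border_row_hits_border_column[OF good assms(2) r] by blast
  have "j = 3 \<or> j = n - 2" if "j \<in> {1..n}" "j \<noteq> c" "A r j = 1" for j
    using Fn_good_row_entries_two_apart[OF good, of r c j] r c that assms(2)
    by (auto simp: row_support_def)
  then show ?thesis using c by blast
qed

theorem corollary1:
  fixes n :: nat and A :: "nat \<Rightarrow> nat \<Rightarrow> bit"
  assumes "n \<ge> 1" and "Fn_good n A"
  shows "(\<forall>i\<in>{1..n}. A i 1 = 1 \<longrightarrow> i = 1 \<or> i = n) \<and>
         (\<forall>i\<in>{1..n}. A i n = 1 \<longrightarrow> i = 1 \<or> i = n) \<and>
         (\<forall>i\<in>{2..n-1}. \<exists>j\<in>{1..n}. mat_row n A i = std_basis n j) \<and>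
         inj_on (mat_row n A) {2..n-1} \<and>
         (\<forall>r\<in>{1, n}. card {j\<in>{1..n}. A r j = 1} \<in> {1, 2}) \<and>
         (\<forall>r\<in>{1, n}. \<exists>c\<in>{1, n}. A r c = 1 \<and>
            (\<forall>j\<in>{1..n}. j \<noteq> c \<and> A r j = 1 \<longrightarrow> j = 3 \<or> j = n - 2))"
proof -
  note good = assms(2)
  have border_columns: "\<forall>i\<in>{1..n}. A i c = 1 \<longrightarrow> i = 1 \<or> i = n" if "c \<in> {1, n}" for c
    using Fn_good_border_column_in_border_row[OF good _ that] by blast
  have middle_rows: "\<exists>j\<in>{1..n}. mat_row n A i = std_basis n j" if i: "i \<in> {2..n-1}" for i
  proof -
    obtain j where "j \<in> {2..n-1}" "mat_row n A i = std_basis n j"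
      by (rule Fn_good_middle_row_std_basis[OF good i])
    then show ?thesis by auto
  qed
  have distinct_rows: "inj_on (mat_row n A) {2..n-1}"
    by (rule inj_on_subset[OF invertible_inj_on_mat_row]) (use good in \<open>auto simp: Fn_good_def\<close>)
  show ?thesis
    using border_columns middle_rows distinct_rows
      Fn_good_border_row_entries[OF good assms(1)] Fn_good_row_support_card[OF good] assms(1)
    by (auto simp: row_support_def)
qed

end
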